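(* Let $\alpha\ge2$ be an even integer and $\beta\ge1$ an integer. Put $\theta=1$ if $\alpha\equiv0\pmod 4$ and $\theta=2$ if $\alpha\equiv2\pmod4$. Let $\Lambda\subseteq\mathbb Z^2$ be the lattice with generator matrix $$G=\begin{pmatrix}\beta & \tfrac{\alpha}{2}+\theta\\ 0 & \alpha\end{pmatrix}.$$ Let $\mathcal S=\{0,\dots,\beta-1\}\times\{0,\dots,\alpha-1\}$ and $\delta=(+1,0)$. Then $\Lambda$ induces a lattice tiling of $\mathcal S$, and $(\Lambda,\mathcal S,\delta)$ defines a folding.
   Context: A shape is a finite nonempty set $\mathcal S\subset\mathbb Z^2$ containing the origin; the origin is its distinguished center point. A lattice is a set $\Lambda=\{u_1v_1+u_2v_2 : u_1,u_2\in\mathbb Z\}$ for linearly independent $v_1,v_2\in\mathbb Z^2$. The matrix $G$ with rows $v_1,v_2$ is a generator matrix. $\Lambda$ induces a lattice tiling of $\mathcal S$ if the translates $\mathcal S+\lambda$, $\lambda\in\Lambda$, are pairwise disjoint and cover $\mathbb Z^2$. For $x\in\mathbb Z^2$, $c(x)$ denotes the unique $\lambda\in\Lambda$ with $x\in\mathcal S+\lambda$. For a nonzero $\delta\in\{-1,0,1\}^2$, the folded-row of $(\Lambda,\mathcal S,\delta)$ is the sequence $p_0=0$, $p_{k+1}=(p_k+\delta)-c(p_k+\delta)$. The triple $(\Lambda,\mathcal S,\delta)$ defines a folding if every element of $\mathcal S$ occurs in the folded-row. *)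

theory Defs
  imports Main
begin

type_synonym pt = "int \<times> int"

definition padd :: "pt \<Rightarrow> pt \<Rightarrow> pt" where
  "padd x y = (fst x + fst y, snd x + snd y)"

definition psub :: "pt \<Rightarrow> pt \<Rightarrow> pt" where
  "psub x y = (fst x - fst y, snd x - snd y)"

text \<open>Lattice generated by the rows v1, v2 of a generator matrix.\<close>
definition lattice_of :: "pt \<Rightarrow> pt \<Rightarrow> pt set" where
  "lattice_of v1 v2 = {(u1 * fst v1 + u2 * fst v2, u1 * snd v1 + u2 * snd v2) | u1 u2 :: int. True}"

definition lin_indep2 :: "pt \<Rightarrow> pt \<Rightarrow> bool" where
  "lin_indep2 v1 v2 \<longleftrightarrow> fst v1 * snd v2 - snd v1 * fst v2 \<noteq> 0"

definition translate :: "pt set \<Rightarrow> pt \<Rightarrow> pt set" where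
  "translate S l = (\<lambda>s. padd s l) ` S"

definition induces_tiling :: "pt set \<Rightarrow> pt set \<Rightarrow> bool" where
  "induces_tiling L S \<longleftrightarrow>
     (\<forall>l\<in>L. \<forall>l'\<in>L. l \<noteq> l' \<longrightarrow> translate S l \<inter> translate S l' = {}) \<and>
     (\<Union>l\<in>L. translate S l) = UNIV"

definition tile_center :: "pt set \<Rightarrow> pt set \<Rightarrow> pt \<Rightarrow> pt" where
  "tile_center L S x = (THE l. l \<in> L \<and> x \<in> translate S l)"

fun folded_row :: "pt set \<Rightarrow> pt set \<Rightarrow> pt \<Rightarrow> nat \<Rightarrow> pt" where
  "folded_row L S d 0 = (0, 0)"
| "folded_row L S d (Suc k) =
     (let q = padd (folded_row L S d k) d in psub q (tile_center L S q))"

definition defines_folding :: "pt set \<Rightarrow> pt set \<Rightarrow> pt \<Rightarrow> bool" where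
  "defines_folding L S d \<longleftrightarrow> (\<forall>s\<in>S. \<exists>k. folded_row L S d k = s)"

end

theory Submission
  imports Defs
begin

(* Proof idea.
   (1) General tiling facts: if a lattice L induces a tiling of a shape S, the centre c(x) is
       characterised by l \<in> L, x \<in> S + l, and it commutes with lattice translations,
       c(x - l) = c(x) - l.  Consequently the folded row is the reduction of the straight row:
       p_k = k\<delta> - c(k\<delta>).
   (2) The rectangle S = [0,b) x [0,a) is tiled by the lattice with rows (b,m), (0,a) for every
       m, with explicit centre c(x) = (b q, q m + a ((x2 - q m) div a)), q = x1 div b.
       Hence, for \<delta> = (1,0), p_k = (k mod b, (-(k div b) m) mod a).
   (3) If gcd m a = 1 then -n m runs through all residues mod a, so every cell of the
       rectangle occurs in the folded row.
   (4) For m = \<alpha>/2 + \<theta> one has 2m - \<alpha> \<in> {2,4} and m odd, hence gcd m \<alpha> = 1;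
       the theorem follows from (2) and (3). *)

definition pscale :: "int \<Rightarrow> pt \<Rightarrow> pt" where
  "pscale k x = (k * fst x, k * snd x)"

lemma lattice_of_psub:
  assumes "l \<in> lattice_of v1 v2" and "l' \<in> lattice_of v1 v2"
  shows "psub l l' \<in> lattice_of v1 v2"
proof -
  obtain u1 u2 where l: "l = (u1 * fst v1 + u2 * fst v2, u1 * snd v1 + u2 * snd v2)"
    using assms(1) unfolding lattice_of_def by blast
  obtain w1 w2 where l': "l' = (w1 * fst v1 + w2 * fst v2, w1 * snd v1 + w2 * snd v2)"
    using assms(2) unfolding lattice_of_def by blast
  have "psub l l' = ((u1 - w1) * fst v1 + (u2 - w2) * fst v2, (u1 - w1) * snd v1 + (u2 - w2) * snd v2)"
    unfolding l l' psub_def by (simp add: algebra_simps)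
  then show ?thesis unfolding lattice_of_def by blast
qed

lemma zero_in_lattice_of: "(0, 0) \<in> lattice_of v1 v2"
proof -
  have "(0, 0) = (0 * fst v1 + 0 * fst v2, 0 * snd v1 + 0 * snd v2)" by simp
  then show ?thesis unfolding lattice_of_def by blast
qed

lemma translate_psub:
  assumes "x \<in> translate S l"
  shows "psub x l' \<in> translate S (psub l l')"
proof -
  obtain s where "s \<in> S" "x = padd s l" using assms unfolding translate_def by blast
  moreover have "psub (padd s l) l' = padd s (psub l l')"
    by (simp add: padd_def psub_def)
  ultimately show ?thesis unfolding translate_def by auto
qed

lemma tile_center_eqI:
  assumes "induces_tiling L S" and "l \<in> L" and "x \<in> translate S l"
  shows "tile_center L S x = l"
proof -
  have "l' = l" if "l' \<in> L" "x \<in> translate S l'" for l'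
    using assms that unfolding induces_tiling_def by blast
  then show ?thesis
    unfolding tile_center_def using assms(2,3) by (intro the_equality) blast+
qed

lemma tile_center_mem:
  assumes "induces_tiling L S"
  shows "tile_center L S x \<in> L \<and> x \<in> translate S (tile_center L S x)"
proof -
  obtain l where "l \<in> L" "x \<in> translate S l"
    using assms unfolding induces_tiling_def by blast
  then show ?thesis using tile_center_eqI[OF assms] by simp
qed

lemma tile_center_psub:
  assumes tiling: "induces_tiling (lattice_of v1 v2) S" and l: "l \<in> lattice_of v1 v2"
  shows "tile_center (lattice_of v1 v2) S (psub x l) = psub (tile_center (lattice_of v1 v2) S x) l"
  using tile_center_mem[OF tiling, of x] l
  by (intro tile_center_eqI[OF tiling] lattice_of_psub translate_psub) auto

lemma folded_row_closed_form:
  assumes tiling: "induces_tiling (lattice_of v1 v2) S" and origin: "(0, 0) \<in> S"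
  shows "folded_row (lattice_of v1 v2) S d k
         = psub (pscale (int k) d) (tile_center (lattice_of v1 v2) S (pscale (int k) d))"
proof (induction k)
  case 0
  have "(0, 0) \<in> translate S (0, 0)"
    using origin unfolding translate_def padd_def by force
  then have "tile_center (lattice_of v1 v2) S (0, 0) = (0, 0)"
    by (intro tile_center_eqI[OF tiling] zero_in_lattice_of)
  then show ?case by (simp add: pscale_def psub_def)
next
  case (Suc k)
  let ?c = "tile_center (lattice_of v1 v2) S"
  let ?l = "?c (pscale (int k) d)"
  have l: "?l \<in> lattice_of v1 v2" using tile_center_mem[OF tiling] by blast
  have step: "padd (folded_row (lattice_of v1 v2) S d k) d = psub (pscale (int (Suc k)) d) ?l"
    unfolding Suc.IH by (simp add: padd_def psub_def pscale_def algebra_simps)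
  show ?case
    unfolding folded_row.simps Let_def step tile_center_psub[OF tiling l]
    by (simp add: psub_def)
qed

definition rect_center :: "int \<Rightarrow> int \<Rightarrow> int \<Rightarrow> pt \<Rightarrow> pt" where
  "rect_center b m a x =
     (let q = fst x div b in (b * q, q * m + a * ((snd x - q * m) div a)))"

lemma rect_center_unique:
  fixes a b m :: int
  assumes "a > 0" and "b > 0"
    and "l \<in> lattice_of (b, m) (0, a)" and "x \<in> translate ({0..b - 1} \<times> {0..a - 1}) l"
  shows "l = rect_center b m a x"
proof -
  obtain u1 u2 where l: "l = (u1 * b, u1 * m + u2 * a)"
    using assms(3) unfolding lattice_of_def by auto
  obtain s1 s2 where s: "0 \<le> s1" "s1 < b" "0 \<le> s2" "s2 < a"
    and x: "x = (s1 + u1 * b, s2 + (u1 * m + u2 * a))"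
    using assms(4) unfolding translate_def padd_def l by force
  have q: "fst x div b = u1"
    using s x by (intro int_div_pos_eq[where r = s1]) (auto simp: algebra_simps)
  have "(snd x - u1 * m) div a = u2"
    using s x by (intro int_div_pos_eq[where r = s2]) (auto simp: algebra_simps)
  then show ?thesis unfolding rect_center_def Let_def q l by (simp add: algebra_simps)
qed

lemma rect_center_covers:
  fixes a b m :: int
  assumes "a > 0" and "b > 0"
  shows "rect_center b m a x \<in> lattice_of (b, m) (0, a)"
    and "x \<in> translate ({0..b - 1} \<times> {0..a - 1}) (rect_center b m a x)"
proof -
  define q where "q = fst x div b"
  define r where "r = (snd x - q * m) div a"
  have c: "rect_center b m a x = (q * b + r * 0, q * m + r * a)"
    unfolding rect_center_def Let_def q_def r_def by (simp add: algebra_simps)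
  then show "rect_center b m a x \<in> lattice_of (b, m) (0, a)"
    unfolding lattice_of_def by auto
  have "fst x = fst x mod b + q * b" "snd x = (snd x - q * m) mod a + q * m + r * a"
    unfolding q_def r_def by (simp_all add: mod_div_mult_eq algebra_simps)
  then have "x = padd (fst x mod b, (snd x - q * m) mod a) (rect_center b m a x)"
    unfolding c padd_def prod_eq_iff by simp
  moreover have "(fst x mod b, (snd x - q * m) mod a) \<in> {0..b - 1} \<times> {0..a - 1}"
    using assms by auto
  ultimately show "x \<in> translate ({0..b - 1} \<times> {0..a - 1}) (rect_center b m a x)"
    unfolding translate_def by blast
qed

lemma rect_tiling:
  fixes a b m :: int
  assumes "a > 0" and "b > 0"
  shows "induces_tiling (lattice_of (b, m) (0, a)) ({0..b - 1} \<times> {0..a - 1})"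
  unfolding induces_tiling_def
  using rect_center_unique[OF assms] rect_center_covers[OF assms, where m = m] by blast

lemma rect_tile_center:
  fixes a b m :: int
  assumes "a > 0" and "b > 0"
  shows "tile_center (lattice_of (b, m) (0, a)) ({0..b - 1} \<times> {0..a - 1}) x = rect_center b m a x"
  using rect_center_covers[OF assms] by (intro tile_center_eqI rect_tiling assms)

lemma rect_folded_row:
  fixes a b m :: int
  assumes "a > 0" and "b > 0"
  shows "folded_row (lattice_of (b, m) (0, a)) ({0..b - 1} \<times> {0..a - 1}) (1, 0) k
         = (int k mod b, (- (int k div b) * m) mod a)"
proof -
  have origin: "(0, 0) \<in> {0..b - 1} \<times> {0..a - 1}" using assms by auto
  have "- (int k div b * m) - a * ((- (int k div b * m)) div a) = (- (int k div b * m)) mod a"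
    by (simp add: minus_div_mult_eq_mod[symmetric] algebra_simps)
  then show ?thesis
    unfolding folded_row_closed_form[OF rect_tiling[OF assms] origin] rect_tile_center[OF assms]
    by (simp add: rect_center_def pscale_def psub_def minus_mod_eq_mult_div[symmetric])
qed

lemma coprime_residue_multiple:
  fixes a m y :: int
  assumes "a > 0" and "gcd m a = 1" and "0 \<le> y" and "y < a"
  shows "\<exists>n \<ge> 0. (- n * m) mod a = y"
proof -
  obtain u v where uv: "u * m + v * a = 1" using bezout_int[of m a] assms(2) by auto
  define n where "n = (- y * u) mod a"
  define t where "t = (- y * u) div a"
  have n: "n = - y * u - a * t" unfolding n_def t_def by (simp add: minus_div_mult_eq_mod[symmetric])
  have "- n * m = y * (u * m) + a * t * m" unfolding n by (simp add: algebra_simps)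
  also have "\<dots> = a * (t * m - y * v) + y"
  proof -
    have "y * (u * m) + y * (v * a) = y" using arg_cong[OF uv, of "\<lambda>z. y * z"] by (simp add: algebra_simps)
    then show ?thesis by (simp add: algebra_simps)
  qed
  finally have "(- n * m) mod a = y" using assms(3,4) by (intro int_mod_pos_eq) auto
  moreover have "n \<ge> 0" unfolding n_def using assms(1) by simp
  ultimately show ?thesis by blast
qed

text \<open>Coprimality of m and a makes (lattice, rectangle, (1,0)) a folding: the cell (s1, s2)
  is p_k for k = b n + s1, where -n m \<equiv> s2 (mod a).\<close>
lemma rect_folding:
  fixes a b m :: int
  assumes a: "a > 0" and b: "b > 0" and coprime: "gcd m a = 1"
  shows "defines_folding (lattice_of (b, m) (0, a)) ({0..b - 1} \<times> {0..a - 1}) (1, 0)"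
  unfolding defines_folding_def
proof
  fix s assume "s \<in> {0..b - 1} \<times> {0..a - 1}"
  then obtain s1 s2 where s: "s = (s1, s2)" "0 \<le> s1" "s1 < b" "0 \<le> s2" "s2 < a" by force
  obtain n where n: "n \<ge> 0" "(- n * m) mod a = s2"
    using coprime_residue_multiple[OF a coprime s(4,5)] by blast
  define k where "k = nat (b * n + s1)"
  have k: "int k = b * n + s1" unfolding k_def using n b s by simp
  have "int k div b = n" "int k mod b = s1"
    using k s by (auto intro: int_div_pos_eq[where r = s1] int_mod_pos_eq[where q = n])
  then have "folded_row (lattice_of (b, m) (0, a)) ({0..b - 1} \<times> {0..a - 1}) (1, 0) k = s"
    unfolding rect_folded_row[OF a b] s using n by simp
  then show "\<exists>k. folded_row (lattice_of (b, m) (0, a)) ({0..b - 1} \<times> {0..a - 1}) (1, 0) k = s"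
    by blast
qed

text \<open>m = \<alpha>/2 + \<theta> is odd and 2m - \<alpha> \<in> {2, 4}; so gcd m \<alpha> divides 4 and is odd, i.e. is 1.\<close>
lemma shift_coprime:
  fixes \<alpha> m :: int
  assumes "even \<alpha>" and m: "m = \<alpha> div 2 + (if \<alpha> mod 4 = 0 then 1 else 2)"
  shows "gcd m \<alpha> = 1"
proof -
  obtain j where j: "\<alpha> = 2 * j" using assms(1) by blast
  have "\<alpha> mod 4 = 0 \<longleftrightarrow> even j" unfolding j by presburger
  then have odd_m: "odd m" and diff: "2 * m - \<alpha> dvd 4"
    unfolding m j by (auto simp: even_add)
  have dvd4: "gcd m \<alpha> dvd 4" using diff by (meson dvd_trans dvd_diff dvd_mult gcd_dvd1 gcd_dvd2)
  have odd_gcd: "odd (gcd m \<alpha>)" using odd_m by (meson dvd_trans gcd_dvd1)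
  have le4: "gcd m \<alpha> \<le> 4" using dvd4 by (rule zdvd_imp_le) simp
  have not3: "gcd m \<alpha> \<noteq> 3"
  proof
    assume "gcd m \<alpha> = 3"
    with dvd4 have "(3::int) dvd 4" by simp
    then show False by simp
  qed
  show ?thesis using odd_gcd le4 not3 gcd_ge_0_int[of m \<alpha>] by presburger
qed

theorem mainTheorem10:
  fixes \<alpha> \<beta> \<theta> :: int
  assumes "\<alpha> \<ge> 2" and "even \<alpha>" and "\<beta> \<ge> 1"
    and "\<theta> = (if \<alpha> mod 4 = 0 then 1 else 2)"
  defines "L \<equiv> lattice_of (\<beta>, \<alpha> div 2 + \<theta>) (0, \<alpha>)"
    and "S \<equiv> {0..\<beta> - 1} \<times> {0..\<alpha> - 1}"
  shows "induces_tiling L S \<and> defines_folding L S (1, 0)"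
proof
  have a: "\<alpha> > 0" and b: "\<beta> > 0" using assms(1,3) by auto
  show "induces_tiling L S" unfolding L_def S_def by (rule rect_tiling[OF a b])
  have "gcd (\<alpha> div 2 + \<theta>) \<alpha> = 1" using shift_coprime[OF assms(2)] assms(4) by simp
  then show "defines_folding L S (1, 0)" unfolding L_def S_def by (rule rect_folding[OF a b])
qed

end
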